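(* Let $\gamma>0$ and let $(x_1,x_2,x_3)$ be distributed according to $\nu=\nu^\gamma_{1/3,3}$. For each $n\in\mathbb{N}$ let $$J_n(u)=\frac{\Gamma(n+\gamma)}{n!\,\Gamma(n+3\gamma-1)}\sum_{k=0}^n(-1)^k\binom nk\frac{\Gamma(n+k+3\gamma-1)}{\Gamma(k+\gamma)}u^k .$$ Then for all $i\ne j$ in $\{1,2,3\}$ and all $n\in\mathbb{N}$, $$E_\nu[J_n(x_i)\mid x_j]=\nu_n\,J_n(x_j),\qquad \nu_n=(-1)^n\frac{\Gamma(2\gamma)\Gamma(n+\gamma)}{\Gamma(\gamma)\Gamma(n+2\gamma)} .$$
   Context: $\nu^{\gamma}(dx)=x^{\gamma-1}e^{-x}\Gamma(\gamma)^{-1}dx$ on $(0,\infty)$ and $\nu^\gamma_{1/3,3}$ is the conditional law of $(\nu^\gamma)^{\otimes3}$ on $\{x\in(0,\infty)^3: x_1+x_2+x_3=1\}$ (a Dirichlet$(\gamma,\gamma,\gamma)$ distribution). The $J_n$ are the Jacobi polynomials orthogonal for the Beta$(\gamma,2\gamma)$ distribution, which is the marginal law of each $x_i$. $E_\nu[\cdot\mid x_j]$ denotes conditional expectation given the $\sigma$-algebra generated by $x_j$. *)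

theory Defs
  imports "HOL-Probability.Probability"
begin

text \<open>Dirichlet(gamma,gamma,gamma) law on the 2-simplex {x1+x2+x3=1, xi>0}, realised
  as a measure on the pair (x1,x2); the third coordinate is x3 = 1 - x1 - x2.\<close>

definition dirichlet_density :: "real \<Rightarrow> real \<times> real \<Rightarrow> real" where
  "dirichlet_density g p =
     (if 0 < fst p \<and> 0 < snd p \<and> fst p + snd p < 1 then
        Gamma (3 * g) / (Gamma g) ^ 3 *
        (fst p powr (g - 1)) * (snd p powr (g - 1)) * ((1 - fst p - snd p) powr (g - 1))
      else 0)"

definition dirichlet3 :: "real \<Rightarrow> (real \<times> real) measure" where
  "dirichlet3 g = density lborel (\<lambda>p. ennreal (dirichlet_density g p))"

definition coord :: "nat \<Rightarrow> real \<times> real \<Rightarrow> real" where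
  "coord i p = (if i = 1 then fst p else if i = 2 then snd p else 1 - fst p - snd p)"

text \<open>Jacobi polynomials orthogonal for Beta(gamma, 2 gamma), as given in the paper.\<close>
definition jacobiJ :: "real \<Rightarrow> nat \<Rightarrow> real \<Rightarrow> real" where
  "jacobiJ g n u =
     Gamma (real n + g) / (fact n * Gamma (real n + 3 * g - 1)) *
     (\<Sum>k=0..n. (-1) ^ k * real (n choose k) *
        Gamma (real n + real k + 3 * g - 1) / Gamma (real k + g) * u ^ k)"

definition jacobi_eig :: "real \<Rightarrow> nat \<Rightarrow> real" where
  "jacobi_eig g n = (-1) ^ n * (Gamma (2 * g) * Gamma (real n + g)) / (Gamma g * Gamma (real n + 2 * g))"

end

theory Submission
  imports Defs "HOL-Computational_Algebra.Formal_Power_Series"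
begin

text \<open>Given \<open>x\<^sub>j = t\<close>, the other free coordinate of the Dirichlet vector is \<open>(1 - t) u\<close> with
  \<open>u \<sim> Beta(\<gamma>, \<gamma>)\<close>, whose moments are \<open>E u\<^sup>k = (\<gamma>)\<^sub>k / (2\<gamma>)\<^sub>k\<close>. Up to a constant, \<open>J\<^sub>n\<close> is the
  terminating hypergeometric polynomial \<open>\<^sub>2F\<^sub>1(-n, n + 3\<gamma> - 1; \<gamma>; u)\<close>, so the conditional expectation
  of \<open>J\<^sub>n(x\<^sub>i)\<close> is the same constant times \<open>\<^sub>2F\<^sub>1(-n, n + 3\<gamma> - 1; 2\<gamma>; 1 - t)\<close>. Expanding \<open>(1 - t)\<^sup>k\<close> and
  summing with the Chu--Vandermonde identity transforms this into
  \<open>(-1)\<^sup>n (\<gamma>)\<^sub>n / (2\<gamma>)\<^sub>n \<^sub>2F\<^sub>1(-n, n + 3\<gamma> - 1; \<gamma>; t)\<close>, which is \<open>\<nu>\<^sub>n J\<^sub>n(t)\<close>. The coordinate \<open>j\<close> is moved into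
  first position by the symmetries \<open>(x, y) \<mapsto> (y, x)\<close> and \<open>(x, y) \<mapsto> (x, 1 - x - y)\<close> of the density.\<close>

section \<open>Terminating hypergeometric sums\<close>

lemma sum_atLeast0_triangle_swap:
  fixes f :: "nat \<Rightarrow> nat \<Rightarrow> 'a::comm_monoid_add"
  shows "(\<Sum>k=0..n. \<Sum>m=0..k. f k m) = (\<Sum>m=0..n. \<Sum>k=m..n. f k m)"
proof -
  have "(\<Sum>k=0..n. \<Sum>m=0..k. f k m) = (\<Sum>k=0..n. \<Sum>m\<in>{m. m \<in> {0..n} \<and> m \<le> k}. f k m)"
    by (intro sum.cong) auto
  also have "\<dots> = (\<Sum>m=0..n. \<Sum>k\<in>{k. k \<in> {0..n} \<and> m \<le> k}. f k m)"
    by (rule sum.swap_restrict) auto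
  also have "\<dots> = (\<Sum>m=0..n. \<Sum>k=m..n. f k m)"
    by (intro sum.cong) auto
  finally show ?thesis .
qed

lemma pochhammer_minus_of_nat_div_fact:
  "pochhammer (- of_nat N :: 'a::field_char_0) j / fact j = (-1) ^ j * of_nat (N choose j)"
proof -
  have "(-1) ^ j * of_nat (N choose j) = (-1) ^ j * ((-1) ^ j * pochhammer (- of_nat N :: 'a) j / fact j)"
    by (simp add: binomial_gbinomial gbinomial_pochhammer)
  also have "\<dots> = pochhammer (- of_nat N) j / fact j"
    by (simp flip: power_mult_distrib)
  finally show ?thesis ..
qed

lemma Chu_Vandermonde_alternating:
  fixes a c :: "'a::field_char_0"
  assumes "\<And>i. i < N \<Longrightarrow> c \<noteq> - of_nat i"
  shows "(\<Sum>j=0..N. (-1) ^ j * of_nat (N choose j) * pochhammer a j / pochhammer c j)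
       = pochhammer (c - a) N / pochhammer c N"
proof -
  have "(\<Sum>j=0..N. (-1) ^ j * of_nat (N choose j) * pochhammer a j / pochhammer c j)
      = (\<Sum>j=0..N. pochhammer a j * pochhammer (- of_nat N) j / (of_nat (fact j) * pochhammer c j))"
    by (intro sum.cong refl)
       (simp add: pochhammer_minus_of_nat_div_fact mult_ac flip: times_divide_eq_right divide_divide_eq_left)
  also have "\<dots> = pochhammer (c - a) N / pochhammer c N"
    by (rule Vandermonde_pochhammer) (use assms in auto)
  finally show ?thesis .
qed

text \<open>\<open>hypergeom_poly n b c t\<close> is \<open>\<^sub>2F\<^sub>1(-n, b; c; t)\<close>, since \<open>(-n)\<^sub>k / k! = (-1)\<^sup>k C(n, k)\<close>.\<close>

definition hypergeom_poly :: "nat \<Rightarrow> real \<Rightarrow> real \<Rightarrow> real \<Rightarrow> real" where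
  "hypergeom_poly n b c t = (\<Sum>k=0..n. (-1) ^ k * real (n choose k) * pochhammer b k / pochhammer c k * t ^ k)"

lemma sum_choose_pochhammer_reindex:
  fixes b c :: real
  assumes c: "c > 0" and mn: "m \<le> n"
  shows "(\<Sum>k=m..n. (-1) ^ k * real (n choose k) * pochhammer b k / pochhammer c k * real (k choose m))
       = ((-1) ^ m * real (n choose m) * pochhammer b m / pochhammer c m) *
         (\<Sum>j=0..n - m. (-1) ^ j * real ((n - m) choose j) * pochhammer (b + real m) j / pochhammer (c + real m) j)"
proof -
  define N where "N = n - m"
  have nN: "n = N + m" using mn by (simp add: N_def)
  have split: "pochhammer x (j + m) = pochhammer x m * pochhammer (x + real m) j" for x :: real and j
    using pochhammer_product'[of x m j] by (simp add: add.commute)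
  have "pochhammer c m \<noteq> 0" "pochhammer (c + real m) j \<noteq> 0" for j
    using pochhammer_pos[of c m] pochhammer_pos[of "c + real m" j] c by auto
  then have summand: "(-1) ^ (j + m) * real (n choose (j + m)) * pochhammer b (j + m) / pochhammer c (j + m)
                     * real ((j + m) choose m)
      = ((-1) ^ m * real (n choose m) * pochhammer b m / pochhammer c m) *
        ((-1) ^ j * real (N choose j) * pochhammer (b + real m) j / pochhammer (c + real m) j)"
    if "j \<le> N" for j
  proof -
    have "real (n choose (j + m)) * real ((j + m) choose m) = real (n choose m) * real (N choose j)"
      using choose_mult[of m "j + m" n] that by (simp add: nN flip: of_nat_mult)
    then show ?thesis
      unfolding split using \<open>pochhammer c m \<noteq> 0\<close> \<open>pochhammer (c + real m) j \<noteq> 0\<close>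
      by (simp add: power_add field_simps)
  qed
  have "(\<Sum>k=m..n. (-1) ^ k * real (n choose k) * pochhammer b k / pochhammer c k * real (k choose m))
      = (\<Sum>j=0..N. (-1) ^ (j + m) * real (n choose (j + m)) * pochhammer b (j + m) / pochhammer c (j + m)
                    * real ((j + m) choose m))"
    using sum.shift_bounds_cl_nat_ivl[of _ 0 m N] by (simp add: nN)
  also have "\<dots> = ((-1) ^ m * real (n choose m) * pochhammer b m / pochhammer c m) *
        (\<Sum>j=0..N. (-1) ^ j * real (N choose j) * pochhammer (b + real m) j / pochhammer (c + real m) j)"
    unfolding sum_distrib_left by (rule sum.cong[OF refl], rule summand) simp
  finally show ?thesis
    by (simp add: N_def)
qed

lemma sum_choose_pochhammer_tail:
  fixes a b c :: real
  assumes a: "a > 0" and c: "c > 0" and b: "b = real n + a + c - 1" and mn: "m \<le> n"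
  shows "(\<Sum>k=m..n. (-1) ^ k * real (n choose k) * pochhammer b k / pochhammer c k * real (k choose m)) * (-1) ^ m
       = (-1) ^ n * pochhammer a n / pochhammer c n * ((-1) ^ m * real (n choose m) * pochhammer b m / pochhammer a m)"
proof -
  define N where "N = n - m"
  have nN: "n = N + m" using mn by (simp add: N_def)
  have "(\<Sum>j=0..N. (-1) ^ j * real (N choose j) * pochhammer (b + real m) j / pochhammer (c + real m) j)
      = pochhammer (c + real m - (b + real m)) N / pochhammer (c + real m) N"
    by (rule Chu_Vandermonde_alternating) (use c in auto)
  also have "pochhammer (c + real m - (b + real m)) N = (-1) ^ N * pochhammer (a + real m) N"
    using pochhammer_minus[of "real N + (a + real m) - 1" N] by (simp add: b nN algebra_simps)
  finally have Chu_Vandermonde: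
    "(\<Sum>j=0..N. (-1) ^ j * real (N choose j) * pochhammer (b + real m) j / pochhammer (c + real m) j)
      = (-1) ^ N * pochhammer (a + real m) N / pochhammer (c + real m) N" .
  have split: "pochhammer x (N + m) = pochhammer x m * pochhammer (x + real m) N" for x :: real
    using pochhammer_product'[of x m N] by (simp add: add.commute)
  have "pochhammer c m \<noteq> 0" "pochhammer a m \<noteq> 0" "pochhammer (c + real m) N \<noteq> 0"
    using pochhammer_pos[of c m] pochhammer_pos[of a m] pochhammer_pos[of "c + real m" N] a c by auto
  moreover have "(-1::real) ^ m * (-1) ^ m = 1"
    by (simp flip: power_mult_distrib)
  ultimately show ?thesis
    unfolding sum_choose_pochhammer_reindex[OF c mn] N_def[symmetric] Chu_Vandermonde
    unfolding nN split by (simp add: power_add field_simps)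
qed

lemma hypergeom_poly_reflect:
  fixes a b c :: real
  assumes a: "a > 0" and c: "c > 0" and b: "b = real n + a + c - 1"
  shows "hypergeom_poly n b c (1 - t) = (-1) ^ n * pochhammer a n / pochhammer c n * hypergeom_poly n b a t"
proof -
  define \<alpha> where "\<alpha> k = (-1) ^ k * real (n choose k) * pochhammer b k / pochhammer c k" for k
  have "hypergeom_poly n b c (1 - t) = (\<Sum>k=0..n. \<Sum>m=0..k. \<alpha> k * (real (k choose m) * (-1) ^ m * t ^ m))"
    unfolding hypergeom_poly_def \<alpha>_def[symmetric]
  proof (rule sum.cong[OF refl])
    fix k
    have "(1 - t) ^ k = (\<Sum>m\<le>k. real (k choose m) * (-t) ^ m * 1 ^ (k - m))"
      using binomial_ring[of "-t" 1 k] by simp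
    then show "\<alpha> k * (1 - t) ^ k = (\<Sum>m=0..k. \<alpha> k * (real (k choose m) * (-1) ^ m * t ^ m))"
      by (simp add: atMost_atLeast0 sum_distrib_left mult.assoc flip: power_mult_distrib)
  qed
  also have "\<dots> = (\<Sum>m=0..n. ((\<Sum>k=m..n. \<alpha> k * real (k choose m)) * (-1) ^ m) * t ^ m)"
    by (simp add: sum_atLeast0_triangle_swap sum_distrib_right mult.assoc)
  also have "\<dots> = (-1) ^ n * pochhammer a n / pochhammer c n * hypergeom_poly n b a t"
    using sum_choose_pochhammer_tail[OF a c b]
    by (simp add: \<alpha>_def hypergeom_poly_def sum_distrib_left mult.assoc)
  finally show ?thesis .
qed

lemma Gamma_add_of_nat_real:
  fixes x :: real
  assumes "x > 0"
  shows "Gamma (x + real k) = pochhammer x k * Gamma x"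
proof -
  have "x \<notin> \<int>\<^sub>\<le>\<^sub>0" using assms nonpos_Ints_nonpos by force
  with pochhammer_Gamma[of x k] Gamma_real_pos[OF assms] show ?thesis by simp
qed

lemma Beta_add_of_nat:
  fixes a c :: real
  assumes a: "a > 0" and c: "c > 0"
  shows "Beta (a + real k) c = Beta a c * pochhammer a k / pochhammer (a + c) k"
proof -
  have "Gamma (a + real k + c) = pochhammer (a + c) k * Gamma (a + c)"
    using Gamma_add_of_nat_real[of "a + c" k] a c by (simp add: algebra_simps)
  moreover have "pochhammer (a + c) k > 0" "Gamma (a + c) > 0"
    using a c by (auto intro: pochhammer_pos Gamma_real_pos)
  ultimately show ?thesis
    unfolding Beta_def Gamma_add_of_nat_real[OF a] by (simp add: field_simps)
qed

lemma jacobi_eig_eq_pochhammer: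
  fixes g :: real
  assumes g: "g > 0"
  shows "jacobi_eig g n = (-1) ^ n * pochhammer g n / pochhammer (2 * g) n"
proof -
  have "Gamma (real n + g) = pochhammer g n * Gamma g" "Gamma (real n + 2 * g) = pochhammer (2 * g) n * Gamma (2 * g)"
    using Gamma_add_of_nat_real[of g n] Gamma_add_of_nat_real[of "2 * g" n] g by (simp_all add: add.commute)
  moreover have "Gamma g > 0" "Gamma (2 * g) > 0" "pochhammer (2 * g) n > 0"
    using g by (auto intro: Gamma_real_pos pochhammer_pos)
  ultimately show ?thesis
    unfolding jacobi_eig_def by (simp add: field_simps)
qed

lemma jacobiJ_eq_hypergeom_poly:
  fixes g :: real
  assumes g: "g > 0" and n: "n > 0"
  shows "jacobiJ g n u = pochhammer g n / fact n * hypergeom_poly n (real n + 3 * g - 1) g u"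
proof -
  define b where "b = real n + 3 * g - 1"
  have b: "b > 0" using g n by (simp add: b_def)
  have Gb: "Gamma (real n + real k + 3 * g - 1) = pochhammer b k * Gamma b" for k
    using Gamma_add_of_nat_real[OF b, of k] by (simp add: b_def algebra_simps)
  have Gg: "Gamma (real k + g) = pochhammer g k * Gamma g" for k
    using Gamma_add_of_nat_real[OF g, of k] by (simp add: add.commute)
  have "Gamma b > 0" "Gamma g > 0" "pochhammer g k > 0" for k
    using b g by (auto intro: Gamma_real_pos pochhammer_pos)
  then show ?thesis
    unfolding jacobiJ_def hypergeom_poly_def Gb Gg b_def[symmetric]
    by (simp add: sum_distrib_left field_simps)
qed

section \<open>Slices of the Dirichlet density\<close>

lemma set_integral_Beta:
  fixes a b :: real
  assumes "a > 0" "b > 0"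
  shows "(LINT u:{0..1}|lborel. u powr (a - 1) * (1 - u) powr (b - 1)) = Beta a b"
  using set_borel_integral_eq_integral(2)[OF integrable_Beta[OF assms]]
    has_integral_Beta_real[OF assms] by (simp add: integral_unique)

definition dirichlet_const :: "real \<Rightarrow> real" where
  "dirichlet_const g = Gamma (3 * g) / Gamma g ^ 3"

definition open_simplex :: "(real \<times> real) set" where
  "open_simplex = {p. 0 < fst p \<and> 0 < snd p \<and> fst p + snd p < 1}"

lemma dirichlet_density_Pair:
  "dirichlet_density g (a, b) =
     (if 0 < a \<and> 0 < b \<and> a + b < 1
      then dirichlet_const g * a powr (g - 1) * b powr (g - 1) * (1 - a - b) powr (g - 1) else 0)"
  by (simp add: dirichlet_density_def dirichlet_const_def)

lemma dirichlet_density_swap: "dirichlet_density g (a, b) = dirichlet_density g (b, a)"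
  unfolding dirichlet_density_Pair by (auto simp: algebra_simps)

lemma dirichlet_density_reflect: "dirichlet_density g (a, 1 - a - b) = dirichlet_density g (a, b)"
  unfolding dirichlet_density_Pair by (auto simp: algebra_simps)

lemma dirichlet_density_outside: "p \<notin> open_simplex \<Longrightarrow> dirichlet_density g p = 0"
  unfolding dirichlet_density_def open_simplex_def by auto

lemma dirichlet_const_pos: "g > 0 \<Longrightarrow> dirichlet_const g > 0"
  by (simp add: dirichlet_const_def Gamma_real_pos)

lemma dirichlet_density_nonneg: "g > 0 \<Longrightarrow> 0 \<le> dirichlet_density g p"
  using dirichlet_const_pos[of g] by (cases p) (auto simp: dirichlet_density_Pair)

lemma borel_measurable_dirichlet_density [measurable]: "dirichlet_density g \<in> borel_measurable borel"
  unfolding dirichlet_density_def borel_prod[symmetric] by measurable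

lemma dirichlet_density_slice_scaled:
  fixes g t u :: real
  assumes t: "0 < t" "t < 1"
  shows "dirichlet_density g (t, (1 - t) * u) * ((1 - t) * u) ^ m
       = dirichlet_const g * t powr (g - 1) * (1 - t) powr (real m + 2 * g - 2) *
         (indicator {0..1} u * (u powr (real m + g - 1) * (1 - u) powr (g - 1)))"
proof (cases "0 < u \<and> u < 1")
  case True
  define c where "c = 1 - t"
  have c: "c > 0" using t by (simp add: c_def)
  have "c * u < c" using True c by simp
  then have below: "t + c * u < 1" unfolding c_def by linarith
  have pos: "0 < c * u" using True c by simp
  have "(c * u) ^ m * ((c * u) powr (g - 1) * (c * (1 - u)) powr (g - 1))
      = (c powr real m * c powr (g - 1) * c powr (g - 1)) *
        (u powr real m * u powr (g - 1) * (1 - u) powr (g - 1))"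
    using c True by (simp add: powr_realpow powr_mult power_mult_distrib mult_ac)
  also have "\<dots> = c powr (real m + 2 * g - 2) * (u powr (real m + g - 1) * (1 - u) powr (g - 1))"
    by (simp add: algebra_simps flip: powr_add)
  finally have powers: "(c * u) ^ m * ((c * u) powr (g - 1) * (c * (1 - u)) powr (g - 1))
      = c powr (real m + 2 * g - 2) * (u powr (real m + g - 1) * (1 - u) powr (g - 1))" .
  have "1 - t - c * u = c * (1 - u)" by (simp add: c_def algebra_simps)
  then have "dirichlet_density g (t, c * u) * (c * u) ^ m
      = dirichlet_const g * t powr (g - 1) * ((c * u) ^ m * ((c * u) powr (g - 1) * (c * (1 - u)) powr (g - 1)))"
    using pos below t by (simp add: dirichlet_density_Pair mult_ac)
  also have "\<dots> = dirichlet_const g * t powr (g - 1) * c powr (real m + 2 * g - 2) *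
      (indicator {0..1} u * (u powr (real m + g - 1) * (1 - u) powr (g - 1)))"
    using True by (simp add: powers indicator_def)
  finally show ?thesis by (simp add: c_def)
next
  case False
  have "\<not> (0 < (1 - t) * u \<and> t + (1 - t) * u < 1)"
  proof
    assume in_simplex: "0 < (1 - t) * u \<and> t + (1 - t) * u < 1"
    then have "0 < u" using t by (simp add: zero_less_mult_iff)
    have "(1 - t) * u < (1 - t) * 1" using in_simplex by (simp only: mult_1_right) linarith
    then have "u < 1" using t by (subst (asm) mult_less_cancel_left_pos) auto
    with \<open>0 < u\<close> False show False by simp
  qed
  then show ?thesis
    using False by (auto simp: dirichlet_density_Pair indicator_def)
qed

lemma dirichlet_slice_moment:
  fixes g t :: real
  assumes g: "g > 0" and t: "0 < t" "t < 1"
  shows "integrable lborel (\<lambda>s. dirichlet_density g (t, s) * s ^ m)"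
    and "(LBINT s. dirichlet_density g (t, s) * s ^ m)
       = dirichlet_const g * t powr (g - 1) * (1 - t) powr (real m + 2 * g - 1) * Beta (real m + g) g"
proof -
  define f where "f s = dirichlet_density g (t, s) * s ^ m" for s
  define K where "K = dirichlet_const g * t powr (g - 1) * (1 - t) powr (real m + 2 * g - 2)"
  define h where "h u = indicator {0..1} u * (u powr (real m + g - 1) * (1 - u) powr (g - 1))" for u :: real
  have t': "1 - t > 0" using t by simp
  have scaled: "f (0 + (1 - t) * u) = K * h u" for u
    using dirichlet_density_slice_scaled[OF t] by (simp add: f_def K_def h_def)
  have h: "integrable lborel h" "(LBINT u. h u) = Beta (real m + g) g"
    using integrable_Beta[of "real m + g" g] set_integral_Beta[of "real m + g" g] g
    by (simp_all add: h_def[abs_def] set_integrable_def set_lebesgue_integral_def)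
  have "integrable lborel (\<lambda>u. f (0 + (1 - t) * u))"
    unfolding scaled using h(1) by simp
  then show "integrable lborel (\<lambda>s. dirichlet_density g (t, s) * s ^ m)"
    using lborel_integrable_real_affine_iff[of "1 - t" f 0] t' by (simp add: f_def[abs_def])
  have "(LBINT s. f s) = (1 - t) * (LBINT u. f (0 + (1 - t) * u))"
    using lborel_integral_real_affine[of "1 - t" f 0] t' by simp
  also have "\<dots> = dirichlet_const g * t powr (g - 1) * ((1 - t) * (1 - t) powr (real m + 2 * g - 2))
                  * Beta (real m + g) g"
    unfolding scaled using h(2) by (simp add: K_def mult_ac)
  also have "(1 - t) * (1 - t) powr (real m + 2 * g - 2) = (1 - t) powr (1 + (real m + 2 * g - 2))"
    using t' by (intro powr_mult_base) simp
  also have "1 + (real m + 2 * g - 2) = real m + 2 * g - 1"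
    by simp
  finally show "(LBINT s. dirichlet_density g (t, s) * s ^ m)
       = dirichlet_const g * t powr (g - 1) * (1 - t) powr (real m + 2 * g - 1) * Beta (real m + g) g"
    by (simp add: f_def)
qed

lemma dirichlet_density_outside_slice: "\<not> (0 < t \<and> t < 1) \<Longrightarrow> dirichlet_density g (t, s) = 0"
  by (rule dirichlet_density_outside) (auto simp: open_simplex_def)

lemma dirichlet_slice_moment_ratio:
  fixes g t :: real
  assumes g: "g > 0"
  shows "(LBINT s. dirichlet_density g (t, s) * s ^ m)
       = (LBINT s. dirichlet_density g (t, s)) * (1 - t) ^ m * pochhammer g m / pochhammer (2 * g) m"
proof (cases "0 < t \<and> t < 1")
  case False
  then show ?thesis by (simp add: dirichlet_density_outside_slice)
next
  case True
  then have t: "0 < t" "t < 1" by auto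
  define D where "D = dirichlet_const g * t powr (g - 1)"
  have "real m + 2 * g - 1 = real m + (2 * g - 1)"
    by simp
  then have "(1 - t) powr (real m + 2 * g - 1) = (1 - t) powr real m * (1 - t) powr (2 * g - 1)"
    by (simp only: powr_add)
  also have "(1 - t) powr real m = (1 - t) ^ m"
    using t by (simp add: powr_realpow)
  finally have powr_split: "(1 - t) powr (real m + 2 * g - 1) = (1 - t) ^ m * (1 - t) powr (2 * g - 1)" .
  have "(LBINT s. dirichlet_density g (t, s) * s ^ m) = D * (1 - t) powr (real m + 2 * g - 1) * Beta (real m + g) g"
    using dirichlet_slice_moment(2)[OF g t, of m] by (simp add: D_def)
  also have "\<dots> = (D * (1 - t) powr (2 * g - 1) * Beta g g) * (1 - t) ^ m * pochhammer g m / pochhammer (2 * g) m"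
    using Beta_add_of_nat[OF g g, of m] unfolding powr_split by (simp add: ac_simps mult_2)
  also have "D * (1 - t) powr (2 * g - 1) * Beta g g = (LBINT s. dirichlet_density g (t, s))"
    using dirichlet_slice_moment(2)[OF g t, of 0] by (simp add: D_def)
  finally show ?thesis .
qed

lemma dirichlet_slice_hypergeom_poly:
  fixes g t b :: real
  assumes g: "g > 0"
  shows "(LBINT s. dirichlet_density g (t, s) * hypergeom_poly n b g s)
       = (LBINT s. dirichlet_density g (t, s)) * hypergeom_poly n b (2 * g) (1 - t)"
proof (cases "0 < t \<and> t < 1")
  case False
  then show ?thesis by (simp add: dirichlet_density_outside_slice)
next
  case True
  then have t: "0 < t" "t < 1" by auto
  define c where "c k = (-1) ^ k * real (n choose k) * pochhammer b k / pochhammer g k" for k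
  have "(LBINT s. dirichlet_density g (t, s) * hypergeom_poly n b g s)
      = (LBINT s. (\<Sum>k=0..n. c k * (dirichlet_density g (t, s) * s ^ k)))"
    by (simp add: hypergeom_poly_def c_def sum_distrib_left mult_ac)
  also have "\<dots> = (\<Sum>k=0..n. c k * (LBINT s. dirichlet_density g (t, s) * s ^ k))"
    using dirichlet_slice_moment(1)[OF g t] by (simp add: Bochner_Integration.integral_sum)
  also have "\<dots> = (\<Sum>k=0..n. c k * ((LBINT s. dirichlet_density g (t, s)) * (1 - t) ^ k
                                      * pochhammer g k / pochhammer (2 * g) k))"
    by (simp only: dirichlet_slice_moment_ratio[OF g])
  also have "\<dots> = (LBINT s. dirichlet_density g (t, s)) * hypergeom_poly n b (2 * g) (1 - t)"
  proof -
    have "pochhammer g k \<noteq> 0" for k using pochhammer_pos[of g k] g by simp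
    then show ?thesis
      by (simp add: hypergeom_poly_def c_def sum_distrib_left field_simps)
  qed
  finally show ?thesis .
qed

lemma dirichlet_slice_jacobiJ:
  fixes g t :: real
  assumes g: "g > 0"
  shows "(LBINT s. dirichlet_density g (t, s) * jacobiJ g n s)
       = jacobi_eig g n * jacobiJ g n t * (LBINT s. dirichlet_density g (t, s))"
proof (cases "n = 0")
  case True
  define C where "C = jacobiJ g n 0"
  have "jacobiJ g n s = C" for s using True by (simp add: C_def jacobiJ_def)
  moreover have "jacobi_eig g n = 1" using True jacobi_eig_eq_pochhammer[OF g] by simp
  ultimately show ?thesis by simp
next
  case False
  define b where "b = real n + 3 * g - 1"
  have "(LBINT s. dirichlet_density g (t, s) * jacobiJ g n s)
      = pochhammer g n / fact n * (LBINT s. dirichlet_density g (t, s) * hypergeom_poly n b g s)"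
    using jacobiJ_eq_hypergeom_poly[OF g] False by (simp add: b_def mult_ac)
  also have "\<dots> = pochhammer g n / fact n * (LBINT s. dirichlet_density g (t, s))
                 * hypergeom_poly n b (2 * g) (1 - t)"
    by (simp add: dirichlet_slice_hypergeom_poly[OF g])
  also have "hypergeom_poly n b (2 * g) (1 - t)
      = (-1) ^ n * pochhammer g n / pochhammer (2 * g) n * hypergeom_poly n b g t"
    by (rule hypergeom_poly_reflect) (use g in \<open>auto simp: b_def\<close>)
  also have "pochhammer g n / fact n * (LBINT s. dirichlet_density g (t, s)) *
      ((-1) ^ n * pochhammer g n / pochhammer (2 * g) n * hypergeom_poly n b g t)
      = jacobi_eig g n * (pochhammer g n / fact n * hypergeom_poly n b g t) * (LBINT s. dirichlet_density g (t, s))"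
    by (simp add: jacobi_eig_eq_pochhammer[OF g] ac_simps)
  also have "pochhammer g n / fact n * hypergeom_poly n b g t = jacobiJ g n t"
    using jacobiJ_eq_hypergeom_poly[OF g] False by (simp add: b_def)
  finally show ?thesis .
qed

lemma dirichlet_slice_reflect:
  fixes h :: "real \<Rightarrow> real"
  shows "(LBINT s. dirichlet_density g (t, s) * h (1 - t - s)) = (LBINT s. dirichlet_density g (t, s) * h s)"
proof -
  have "(LBINT s. dirichlet_density g (t, s) * h s)
      = (LBINT s. dirichlet_density g (t, (1 - t) + (-1) * s) * h ((1 - t) + (-1) * s))"
    using lborel_integral_real_affine[of "-1" "\<lambda>s. dirichlet_density g (t, s) * h s" "1 - t"] by simp
  also have "\<dots> = (LBINT s. dirichlet_density g (t, s) * h (1 - t - s))"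
    using dirichlet_density_reflect[of g t] by simp
  finally show ?thesis ..
qed

lemma nn_integral_dirichlet_slice:
  fixes g t :: real
  assumes g: "g > 0"
  shows "(\<integral>\<^sup>+ s. ennreal (dirichlet_density g (t, s)) \<partial>lborel)
       = ennreal (indicator {0..1} t * (dirichlet_const g * Beta g g * (t powr (g - 1) * (1 - t) powr (2 * g - 1))))"
proof (cases "0 < t \<and> t < 1")
  case True
  then have t: "0 < t" "t < 1" by auto
  have "(\<integral>\<^sup>+ s. ennreal (dirichlet_density g (t, s)) \<partial>lborel) = ennreal (LBINT s. dirichlet_density g (t, s))"
    using dirichlet_slice_moment(1)[OF g t, of 0] dirichlet_density_nonneg[OF g]
    by (intro nn_integral_eq_integral) auto
  then show ?thesis
    using dirichlet_slice_moment(2)[OF g t, of 0] t by (simp add: mult_ac)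
next
  case False
  then have marginal_zero:
    "indicator {0..1} t * (dirichlet_const g * Beta g g * (t powr (g - 1) * (1 - t) powr (2 * g - 1))) = (0::real)"
    by (cases "t = 0 \<or> t = 1") (auto simp: indicator_def)
  show ?thesis
    unfolding marginal_zero using False by (simp add: dirichlet_density_outside_slice)
qed

lemma integrable_dirichlet_density:
  fixes g :: real
  assumes g: "g > 0"
  shows "integrable lborel (dirichlet_density g)"
proof -
  define marginal where "marginal t =
    indicator {0..1} t * (dirichlet_const g * Beta g g * (t powr (g - 1) * (1 - t) powr (2 * g - 1)))" for t :: real
  have "integrable lborel (\<lambda>t. dirichlet_const g * Beta g g *
          (indicator {0..1} t * (t powr (g - 1) * (1 - t) powr (2 * g - 1))))"
    using integrable_Beta[of g "2 * g"] g unfolding set_integrable_def by simp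
  then have marginal_integrable: "integrable lborel marginal"
    by (simp add: marginal_def[abs_def] mult_ac)
  have "Beta g g > 0" using g by (simp add: Beta_def Gamma_real_pos)
  then have marginal_nonneg: "0 \<le> marginal t" for t
    using dirichlet_const_pos[OF g] by (simp add: marginal_def indicator_def)
  have "(\<integral>\<^sup>+ p. ennreal (dirichlet_density g p) \<partial>lborel)
      = (\<integral>\<^sup>+ t. (\<integral>\<^sup>+ s. ennreal (dirichlet_density g (t, s)) \<partial>lborel) \<partial>lborel)"
    unfolding lborel_prod[symmetric]
    by (rule sigma_finite_measure.nn_integral_fst[OF sigma_finite_lborel, symmetric]) (simp add: lborel_prod)
  also have "\<dots> = (\<integral>\<^sup>+ t. ennreal (marginal t) \<partial>lborel)"
    by (simp add: nn_integral_dirichlet_slice[OF g] marginal_def)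
  also have "\<dots> < \<infinity>"
    using integrableD(2)[OF marginal_integrable] marginal_nonneg by (simp add: top.not_eq_extremum)
  finally show ?thesis
    by (intro integrableI_nonneg) (auto simp: dirichlet_density_nonneg[OF g])
qed

lemma integrable_dirichlet_density_mult:
  fixes g B :: real and F :: "real \<times> real \<Rightarrow> real"
  assumes g: "g > 0" and F: "F \<in> borel_measurable borel"
    and bounded: "\<And>p. p \<in> open_simplex \<Longrightarrow> \<bar>F p\<bar> \<le> B"
  shows "integrable lborel (\<lambda>p. dirichlet_density g p * F p)"
proof (rule Bochner_Integration.integrable_bound)
  show "integrable lborel (\<lambda>p. B * dirichlet_density g p)"
    using integrable_dirichlet_density[OF g] by simp
  show "(\<lambda>p. dirichlet_density g p * F p) \<in> borel_measurable lborel"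
    using F by measurable
  have "\<bar>dirichlet_density g p * F p\<bar> \<le> \<bar>B * dirichlet_density g p\<bar>" for p
  proof (cases "p \<in> open_simplex")
    case True
    then have "\<bar>dirichlet_density g p * F p\<bar> \<le> dirichlet_density g p * B"
      using bounded dirichlet_density_nonneg[OF g, of p] by (simp add: abs_mult mult_left_mono)
    then show ?thesis by (simp add: mult.commute)
  next
    case False
    then show ?thesis by (simp add: dirichlet_density_outside)
  qed
  then show "AE p in lborel. norm (dirichlet_density g p * F p) \<le> norm (B * dirichlet_density g p)"
    by simp
qed

section \<open>Integration over the simplex\<close>

lemma pair_sigma_finite_lborel: "pair_sigma_finite (lborel :: real measure) (lborel :: real measure)"
  by (simp add: pair_sigma_finite_def sigma_finite_lborel)

lemma integral_dirichlet_density_iterated: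
  fixes g B :: real and F :: "real \<times> real \<Rightarrow> real"
  assumes g: "g > 0" and F: "F \<in> borel_measurable borel"
    and bounded: "\<And>p. p \<in> open_simplex \<Longrightarrow> \<bar>F p\<bar> \<le> B"
  shows "(LINT p|lborel. dirichlet_density g p * F p) = (LBINT t. LBINT s. dirichlet_density g (t, s) * F (t, s))"
proof -
  have "integrable (lborel \<Otimes>\<^sub>M lborel) (\<lambda>p. dirichlet_density g p * F p)"
    using integrable_dirichlet_density_mult[OF g F bounded] by (simp add: lborel_prod)
  from pair_sigma_finite.integral_fst'[OF pair_sigma_finite_lborel this] show ?thesis
    by (simp add: lborel_prod)
qed

lemma integral_dirichlet_density_swap:
  fixes F :: "real \<times> real \<Rightarrow> real"
  assumes F [measurable]: "F \<in> borel_measurable borel"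
  shows "(LINT p|lborel. dirichlet_density g p * F p) = (LINT p|lborel. dirichlet_density g p * F (snd p, fst p))"
proof -
  have "(\<lambda>p::real \<times> real. (snd p, fst p)) \<in> borel \<rightarrow>\<^sub>M borel"
    unfolding borel_prod[symmetric] by measurable
  then have "(\<lambda>p. dirichlet_density g p * F (snd p, fst p)) \<in> borel_measurable borel"
    by measurable
  then have "(\<lambda>p. dirichlet_density g p * F (snd p, fst p)) \<in> borel_measurable (lborel \<Otimes>\<^sub>M lborel)"
    by (simp add: lborel_prod)
  from pair_sigma_finite.integral_product_swap[OF pair_sigma_finite_lborel this] show ?thesis
    by (simp add: lborel_prod dirichlet_density_swap split_beta')
qed

lemma integral_dirichlet_density_reflect:
  fixes g B :: real and F :: "real \<times> real \<Rightarrow> real"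
  assumes g: "g > 0" and F [measurable]: "F \<in> borel_measurable borel"
    and bounded: "\<And>p. p \<in> open_simplex \<Longrightarrow> \<bar>F p\<bar> \<le> B"
  shows "(LINT p|lborel. dirichlet_density g p * F p)
       = (LINT p|lborel. dirichlet_density g p * F (fst p, 1 - fst p - snd p))"
proof -
  have "(\<lambda>p. F (fst p, 1 - fst p - snd p)) \<in> borel_measurable borel"
    unfolding borel_prod[symmetric] by measurable
  moreover have "\<bar>F (fst p, 1 - fst p - snd p)\<bar> \<le> B" if "p \<in> open_simplex" for p
    using that by (intro bounded) (auto simp: open_simplex_def)
  ultimately have "(LINT p|lborel. dirichlet_density g p * F (fst p, 1 - fst p - snd p))
      = (LBINT t. LBINT s. dirichlet_density g (t, s) * F (t, 1 - t - s))"
    by (subst integral_dirichlet_density_iterated[OF g]) simp_all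
  also have "\<dots> = (LBINT t. LBINT s. dirichlet_density g (t, s) * F (t, s))"
    using dirichlet_slice_reflect[of g _ "\<lambda>s. F (_, s)"] by simp
  also have "\<dots> = (LINT p|lborel. dirichlet_density g p * F p)"
    by (simp add: integral_dirichlet_density_iterated[OF g F bounded])
  finally show ?thesis ..
qed

definition simplex_chart :: "nat \<Rightarrow> real \<times> real \<Rightarrow> real \<times> real" where
  "simplex_chart j p = (if j = 1 then p else if j = 2 then (snd p, fst p) else (snd p, 1 - fst p - snd p))"

lemma measurable_simplex_chart [measurable]: "simplex_chart j \<in> borel \<rightarrow>\<^sub>M borel"
  unfolding simplex_chart_def borel_prod[symmetric] by (cases "j = 1"; cases "j = 2") simp_all

lemma simplex_chart_in_open_simplex: "p \<in> open_simplex \<Longrightarrow> simplex_chart j p \<in> open_simplex"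
  by (auto simp: simplex_chart_def open_simplex_def)

lemma coord_simplex_chart: "j \<in> {1, 2, 3} \<Longrightarrow> coord j (simplex_chart j p) = fst p"
  by (auto simp: coord_def simplex_chart_def)

lemma coord_simplex_chart_other:
  assumes "i \<in> {1, 2, 3}" "j \<in> {1, 2, 3}" "i \<noteq> j"
  shows "(\<forall>p. coord i (simplex_chart j p) = snd p)
       \<or> (\<forall>p. coord i (simplex_chart j p) = 1 - fst p - snd p)"
  using assms by (auto simp: coord_def simplex_chart_def)

lemma integral_dirichlet_density_chart:
  fixes g B :: real and F :: "real \<times> real \<Rightarrow> real"
  assumes g: "g > 0" and F [measurable]: "F \<in> borel_measurable borel"
    and bounded: "\<And>p. p \<in> open_simplex \<Longrightarrow> \<bar>F p\<bar> \<le> B" and j: "j \<in> {1, 2, 3}"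
  shows "(LINT p|lborel. dirichlet_density g p * F p) = (LINT p|lborel. dirichlet_density g p * F (simplex_chart j p))"
proof -
  consider "j = 1" | "j = 2" | "j = 3" using j by auto
  then show ?thesis
  proof cases
    case 1
    then show ?thesis by (simp add: simplex_chart_def)
  next
    case 2
    then show ?thesis using integral_dirichlet_density_swap[OF F] by (simp add: simplex_chart_def)
  next
    case 3
    have "(\<lambda>p. F (fst p, 1 - fst p - snd p)) \<in> borel_measurable borel"
      unfolding borel_prod[symmetric] by measurable
    with 3 show ?thesis
      using integral_dirichlet_density_reflect[OF g F bounded]
        integral_dirichlet_density_swap[of "\<lambda>p. F (fst p, 1 - fst p - snd p)"]
      by (simp add: simplex_chart_def diff_diff_eq add.commute)
  qed
qed

lemma dirichlet_slice_coord_other: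
  fixes h :: "real \<Rightarrow> real"
  assumes "i \<in> {1, 2, 3}" "j \<in> {1, 2, 3}" "i \<noteq> j"
  shows "(LBINT s. dirichlet_density g (t, s) * h (coord i (simplex_chart j (t, s))))
       = (LBINT s. dirichlet_density g (t, s) * h s)"
  using coord_simplex_chart_other[OF assms] dirichlet_slice_reflect[of g t h] by auto

lemma borel_measurable_coord [measurable]: "coord i \<in> borel_measurable borel"
  unfolding coord_def borel_prod[symmetric] by measurable

lemma coord_in_unit_interval: "p \<in> open_simplex \<Longrightarrow> coord i p \<in> {0..1}"
  by (auto simp: open_simplex_def coord_def)

lemma borel_measurable_jacobiJ [measurable]: "jacobiJ g n \<in> borel_measurable borel"
  unfolding jacobiJ_def by measurable

lemma jacobiJ_bounded: "\<exists>B. \<forall>u\<in>{0..1}. \<bar>jacobiJ g n u\<bar> \<le> B"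
proof -
  have "continuous_on {0..1} (jacobiJ g n)"
    unfolding jacobiJ_def[abs_def] by (intro continuous_intros)
  then have "bounded (jacobiJ g n ` {0..1})"
    by (intro compact_imp_bounded compact_continuous_image) auto
  then show ?thesis
    by (auto simp: bounded_real)
qed

section \<open>The conditional expectation\<close>

lemma integral_dirichlet_density_jacobiJ_coord:
  fixes g H :: real and h :: "real \<Rightarrow> real"
  assumes g: "g > 0" and ij: "i \<in> {1, 2, 3}" "j \<in> {1, 2, 3}" "i \<noteq> j"
    and h [measurable]: "h \<in> borel_measurable borel" and h_bounded: "\<And>x. \<bar>h x\<bar> \<le> H"
  shows "(LINT p|lborel. dirichlet_density g p * (h (coord j p) * jacobiJ g n (coord i p)))
       = (LINT p|lborel. dirichlet_density g p * (h (coord j p) * (jacobi_eig g n * jacobiJ g n (coord j p))))"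
proof -
  obtain B where B: "\<And>u. u \<in> {0..1} \<Longrightarrow> \<bar>jacobiJ g n u\<bar> \<le> B"
    using jacobiJ_bounded by blast
  define F where "F c k p = h (coord j p) * (c * jacobiJ g n (coord k p))" for c k p
  have F_measurable [measurable]: "F c k \<in> borel_measurable borel" for c k
    unfolding F_def[abs_def] by measurable
  have "0 \<le> H"
    using h_bounded[of 0] by (meson abs_ge_zero order_trans)
  have F_bounded: "\<bar>F c k p\<bar> \<le> H * (\<bar>c\<bar> * B)" if "p \<in> open_simplex" for c k p
    unfolding F_def abs_mult using h_bounded B[OF coord_in_unit_interval[OF that]] \<open>0 \<le> H\<close>
    by (intro mult_mono mult_left_mono) auto
  have chart_bounded: "\<bar>F c k (simplex_chart j p)\<bar> \<le> H * (\<bar>c\<bar> * B)" if "p \<in> open_simplex" for c k p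
    using F_bounded[OF simplex_chart_in_open_simplex[OF that]] .
  have iterated: "(LINT p|lborel. dirichlet_density g p * F c k p)
      = (LBINT t. LBINT s. dirichlet_density g (t, s) * F c k (simplex_chart j (t, s)))" for c k
    by (simp add: integral_dirichlet_density_chart[OF g F_measurable F_bounded ij(2)]
        integral_dirichlet_density_iterated[OF g _ chart_bounded])
  have "(LINT p|lborel. dirichlet_density g p * F 1 i p)
      = (LBINT t. h t * (LBINT s. dirichlet_density g (t, s) * jacobiJ g n (coord i (simplex_chart j (t, s)))))"
    unfolding iterated by (simp add: F_def coord_simplex_chart[OF ij(2)] mult_ac)
  also have "\<dots> = (LBINT t. h t * (LBINT s. dirichlet_density g (t, s) * jacobiJ g n s))"
    by (simp add: dirichlet_slice_coord_other[OF ij])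
  also have "\<dots> = (LBINT t. h t * (jacobi_eig g n * jacobiJ g n t * (LBINT s. dirichlet_density g (t, s))))"
    by (simp add: dirichlet_slice_jacobiJ[OF g])
  also have "\<dots> = (LINT p|lborel. dirichlet_density g p * F (jacobi_eig g n) j p)"
    unfolding iterated by (simp add: F_def coord_simplex_chart[OF ij(2)] mult_ac)
  finally show ?thesis
    by (simp add: F_def)
qed

lemma finite_measure_dirichlet3:
  fixes g :: real
  assumes g: "g > 0"
  shows "finite_measure (dirichlet3 g)"
proof (rule finite_measureI)
  have "emeasure (dirichlet3 g) (space (dirichlet3 g)) = (\<integral>\<^sup>+ p. ennreal (dirichlet_density g p) \<partial>lborel)"
    by (simp add: dirichlet3_def emeasure_density)
  also have "\<dots> < \<infinity>"
    using integrableD(2)[OF integrable_dirichlet_density[OF g]] dirichlet_density_nonneg[OF g]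
    by (simp add: top.not_eq_extremum)
  finally show "emeasure (dirichlet3 g) (space (dirichlet3 g)) \<noteq> \<infinity>"
    by simp
qed

lemma integrable_dirichlet3:
  fixes g B :: real and f :: "real \<times> real \<Rightarrow> real"
  assumes g: "g > 0" and f: "f \<in> borel_measurable borel"
    and bounded: "\<And>p. p \<in> open_simplex \<Longrightarrow> \<bar>f p\<bar> \<le> B"
  shows "integrable (dirichlet3 g) f"
  unfolding dirichlet3_def using integrable_dirichlet_density_mult[OF g f bounded] f
  by (subst integrable_density) (auto simp: dirichlet_density_nonneg[OF g])

lemma set_integral_dirichlet3:
  fixes g :: real and f :: "real \<times> real \<Rightarrow> real"
  assumes g: "g > 0" and A: "A \<in> sets borel" and f: "f \<in> borel_measurable borel"
  shows "(\<integral>x\<in>A. f x \<partial>dirichlet3 g) = (LINT p|lborel. dirichlet_density g p * (indicator A p * f p))"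
  unfolding set_lebesgue_integral_def dirichlet3_def using A f
  by (subst integral_density) (auto simp: dirichlet_density_nonneg[OF g])

lemma sets_vimage_algebra_coord:
  "sets (vimage_algebra (space (dirichlet3 g)) (coord j) borel) = {coord j -` C | C. C \<in> sets borel}"
  using sets_vimage_algebra2[of "coord j" "space (dirichlet3 g)" borel] by (simp add: dirichlet3_def)

lemma finite_measure_subalgebra_dirichlet3_coord:
  fixes g :: real
  assumes g: "g > 0"
  shows "finite_measure_subalgebra (dirichlet3 g) (vimage_algebra (space (dirichlet3 g)) (coord j) borel)"
proof -
  have "subalgebra (dirichlet3 g) (vimage_algebra (space (dirichlet3 g)) (coord j) borel)"
    using measurable_sets[OF borel_measurable_coord] unfolding subalgebra_def sets_vimage_algebra_coord
    by (auto simp: dirichlet3_def)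
  with finite_measure_dirichlet3[OF g] show ?thesis
    by (simp add: finite_measure_subalgebra_def finite_measure_subalgebra_axioms_def)
qed

lemma integrable_dirichlet3_jacobiJ_coord:
  fixes g c :: real
  assumes g: "g > 0"
  shows "integrable (dirichlet3 g) (\<lambda>p. c * jacobiJ g n (coord k p))"
proof -
  obtain B where B: "\<And>u. u \<in> {0..1} \<Longrightarrow> \<bar>jacobiJ g n u\<bar> \<le> B"
    using jacobiJ_bounded by blast
  show ?thesis
  proof (rule integrable_dirichlet3[OF g])
    show "(\<lambda>p. c * jacobiJ g n (coord k p)) \<in> borel_measurable borel"
      by measurable
    show "\<bar>c * jacobiJ g n (coord k p)\<bar> \<le> \<bar>c\<bar> * B" if "p \<in> open_simplex" for p
      using B[OF coord_in_unit_interval[OF that]] by (simp add: abs_mult mult_left_mono)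
  qed
qed

lemma set_integral_dirichlet3_jacobiJ_coord:
  fixes g :: real
  assumes g: "g > 0" and ij: "i \<in> {1, 2, 3}" "j \<in> {1, 2, 3}" "i \<noteq> j" and C: "C \<in> sets borel"
  shows "(\<integral>x\<in>coord j -` C. jacobiJ g n (coord i x) \<partial>dirichlet3 g)
       = (\<integral>x\<in>coord j -` C. jacobi_eig g n * jacobiJ g n (coord j x) \<partial>dirichlet3 g)"
proof -
  have A: "coord j -` C \<in> sets borel"
    using measurable_sets[OF borel_measurable_coord C] by simp
  have indicator_A: "indicator (coord j -` C) p = (indicator C (coord j p) :: real)" for p
    by (simp add: indicator_def)
  have "(\<integral>x\<in>coord j -` C. jacobiJ g n (coord i x) \<partial>dirichlet3 g)
      = (LINT p|lborel. dirichlet_density g p * (indicator C (coord j p) * jacobiJ g n (coord i p)))"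
    by (simp add: set_integral_dirichlet3[OF g A] indicator_A)
  also have "\<dots> = (LINT p|lborel. dirichlet_density g p *
                     (indicator C (coord j p) * (jacobi_eig g n * jacobiJ g n (coord j p))))"
    by (rule integral_dirichlet_density_jacobiJ_coord[OF g ij, where H = 1]) (use C in auto)
  also have "\<dots> = (\<integral>x\<in>coord j -` C. jacobi_eig g n * jacobiJ g n (coord j x) \<partial>dirichlet3 g)"
    by (subst set_integral_dirichlet3[OF g A]) (simp_all add: indicator_A)
  finally show ?thesis .
qed

theorem mainTheorem16:
  fixes g :: real and i j n :: nat
  assumes "0 < g"
    and "i \<in> {1, 2, 3}" and "j \<in> {1, 2, 3}" and "i \<noteq> j"
  shows "AE p in dirichlet3 g.
           real_cond_exp (dirichlet3 g) (vimage_algebra (space (dirichlet3 g)) (coord j) borel)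
             (\<lambda>q. jacobiJ g n (coord i q)) p
           = jacobi_eig g n * jacobiJ g n (coord j p)"
proof -
  note g = assms(1) and ij = assms(2-4)
  interpret finite_measure_subalgebra "dirichlet3 g" "vimage_algebra (space (dirichlet3 g)) (coord j) borel"
    using finite_measure_subalgebra_dirichlet3_coord[OF g] .
  show ?thesis
  proof (rule real_cond_exp_charact)
    fix A assume "A \<in> sets (vimage_algebra (space (dirichlet3 g)) (coord j) borel)"
    then obtain C where "C \<in> sets borel" and "A = coord j -` C"
      unfolding sets_vimage_algebra_coord by blast
    then show "(\<integral>x\<in>A. jacobiJ g n (coord i x) \<partial>dirichlet3 g)
        = (\<integral>x\<in>A. jacobi_eig g n * jacobiJ g n (coord j x) \<partial>dirichlet3 g)"
      using set_integral_dirichlet3_jacobiJ_coord[OF g ij] by simp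
  next
    show "integrable (dirichlet3 g) (\<lambda>p. jacobiJ g n (coord i p))"
      using integrable_dirichlet3_jacobiJ_coord[OF g, of 1] by simp
    show "integrable (dirichlet3 g) (\<lambda>p. jacobi_eig g n * jacobiJ g n (coord j p))"
      by (rule integrable_dirichlet3_jacobiJ_coord[OF g])
    have "coord j \<in> vimage_algebra (space (dirichlet3 g)) (coord j) borel \<rightarrow>\<^sub>M borel"
      by (rule measurable_vimage_algebra1) simp
    then show "(\<lambda>p. jacobi_eig g n * jacobiJ g n (coord j p))
        \<in> borel_measurable (vimage_algebra (space (dirichlet3 g)) (coord j) borel)"
      by measurable
  qed
qed

end
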